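(* Fix $\alpha\in\{\text{rotor routing},\ \text{Bernardi}\}$, and for a ribbon graph $(H,\sigma)$ and $u\in V(H)$ write $\alpha_u^{H}:\operatorname{Pic}^0(H)\times\mathcal T(H)\to\mathcal T(H)$ for the corresponding sandpile torsor with basepoint $u$. There exist ribbon graphs $(G,\rho)$ and $(G',\rho')$ of genera $g$ and $g'$, with $V(G)=V(G')$, together with a bijection $\varphi:\mathcal T(G)\to\mathcal T(G')$ and a group isomorphism $\gamma:\operatorname{Pic}^0(G)\to\operatorname{Pic}^0(G')$, such that for every vertex $v\in V(G)$, every $S\in\operatorname{Pic}^0(G)$ and every $T\in\mathcal T(G)$, $$\varphi\big(\alpha_v^{G}(S,T)\big)=\alpha_v^{G'}\big(\gamma(S),\varphi(T)\big),$$ and such that $g\neq g'$.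
   Context: Graphs are finite and connected, may have multiple edges, and have no loops. $\mathcal T(G)$ is the set of spanning trees of $G$ (as subsets of $E(G)$). A ribbon graph $(G,\rho)$ is a graph $G$ together with, for each vertex $u$, a cyclic order $\rho_u$ on the edges incident to $u$. $\operatorname{Div}^0(G)$ is the group of integer vectors $\sum_u n_u u$ with $\sum n_u=0$ (chip configurations); firing a vertex $u$ moves one chip from $u$ along each edge incident to $u$; $\operatorname{Pic}^0(G)=\operatorname{Div}^0(G)/\operatorname{im}(\Delta)$, where $\Delta$ is the graph Laplacian, i.e. two degree-zero divisors are equivalent iff they differ by an integer combination of firings. More generally $\operatorname{Pic}^k(G)$ is the set of degree-$k$ divisors modulo the same equivalence. Rotor routing torsor $r_v$ (basepoint $v$): for $S\in\operatorname{Pic}^0(G)$ and $T\in\mathcal T(G)$, choose a representative of $S$ with nonnegative chips at every vertex other than $v$; orient $T$ towards $v$, so each $u\neq v$ has one outgoing edge (its rotor). While some $u\neq v$ has a positive number of chips, pick such a $u$, advance its rotor to the next edge in $\rho_u$, and send one chip from $u$ along this new rotor edge to its other endpoint. When all vertices other than $v$ have zero chips, the rotors (unoriented) form a spanning tree $r_v(S,T)$; this is independent of all choices and defines a free transitive action. Bernardi torsor $\beta_v$: an edge $e$ with endpoints $u_1,u_2$ has half-edges $(e,u_1),(e,u_2)$. For $T\in\mathcal T(G)$, fix an edge $e_0$ incident to $v$ and start at the half-edge $(e_0,v)$. At current half-edge $(e',v')$: if $e'\in T$, let $w'$ be the other endpoint of $e'$ and move to $(e'',w')$ where $e''$ follows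 $e'$ in $\rho_{w'}$; if $e'\notin T$, move to $(\tilde e,v')$ where $\tilde e$ follows $e'$ in $\rho_{v'}$, and place a chip on $v'$ if the other half-edge of $e'$ has not yet been visited. Stop on returning to $(e_0,v)$. The resulting divisor $D_T$ has degree $|E(G)|-|V(G)|+1=:k$; the classes $[D_T]\in\operatorname{Pic}^k(G)$ are distinct for distinct $T$ and exhaust $\operatorname{Pic}^k(G)$, and $\beta_v(S,T)$ is the unique $T'$ with $[D_{T'}]=[D_T]+S$ (independent of $e_0$). Genus: a cycle (face) of $(G,\rho)$ is a closed walk such that whenever it enters a vertex $u$ along an edge $e$ it leaves along the edge following $e$ in $\rho_u$; equivalently an orbit of the permutation of half-edges sending (edge $e$ leaving $u$ towards $u'$) to (edge following $e$ in $\rho_{u'}$, leaving $u'$). With $\operatorname{cyc}(G,\rho)$ the number of cycles, the genus $g$ of $(G,\rho)$ (the genus of the associated closed surface) satisfies $2g=2-|V(G)|+|E(G)|-\operatorname{cyc}(G,\rho)$. *)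

theory Defs
  imports "HOL-Algebra.Group"
begin

record ('v,'e) mgraph =
  verts  :: "'v set"
  edges  :: "'e set"
  endpts :: "'e \<Rightarrow> 'v set"

definition other :: "('v,'e) mgraph \<Rightarrow> 'e \<Rightarrow> 'v \<Rightarrow> 'v" where
  "other G e u = (THE w. w \<in> endpts G e \<and> w \<noteq> u)"

definition inc :: "('v,'e) mgraph \<Rightarrow> 'v \<Rightarrow> 'e set" where
  "inc G u = {e \<in> edges G. u \<in> endpts G e}"

definition adj :: "('v,'e) mgraph \<Rightarrow> 'e set \<Rightarrow> 'v \<Rightarrow> 'v \<Rightarrow> bool" where
  "adj G F u w \<longleftrightarrow> (\<exists>e\<in>F. endpts G e = {u, w})"

definition connected_by :: "('v,'e) mgraph \<Rightarrow> 'e set \<Rightarrow> bool" where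
  "connected_by G F \<longleftrightarrow> (\<forall>u\<in>verts G. \<forall>w\<in>verts G. (adj G F)\<^sup>*\<^sup>* u w)"

definition graph :: "('v,'e) mgraph \<Rightarrow> bool" where
  "graph G \<longleftrightarrow> finite (verts G) \<and> finite (edges G) \<and> verts G \<noteq> {} \<and>
     (\<forall>e\<in>edges G. endpts G e \<subseteq> verts G \<and> card (endpts G e) = 2) \<and>
     connected_by G (edges G)"

text \<open>A ribbon structure: for each vertex u, rho u is a cyclic permutation of the edges
  incident to u (rho u e = the edge following e in the cyclic order at u).\<close>
definition ribbon_graph :: "('v,'e) mgraph \<Rightarrow> ('v \<Rightarrow> 'e \<Rightarrow> 'e) \<Rightarrow> bool" where
  "ribbon_graph G \<rho> \<longleftrightarrow> graph G \<and>
     (\<forall>u\<in>verts G. bij_betw (\<rho> u) (inc G u) (inc G u) \<and>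
        (\<forall>e\<in>inc G u. \<forall>f\<in>inc G u. \<exists>n. (\<rho> u ^^ n) e = f))"

text \<open>Spanning trees: connected spanning edge sets that are minimally connected
  (every edge is a bridge, i.e. acyclic).\<close>
definition spanning_trees :: "('v,'e) mgraph \<Rightarrow> 'e set set" where
  "spanning_trees G = {T. T \<subseteq> edges G \<and> connected_by G T \<and>
       (\<forall>e\<in>T. \<not> connected_by G (T - {e}))}"

definition Div0 :: "('v,'e) mgraph \<Rightarrow> ('v \<Rightarrow> int) set" where
  "Div0 G = {D. (\<forall>w. w \<notin> verts G \<longrightarrow> D w = 0) \<and> (\<Sum>w\<in>verts G. D w) = 0}"

text \<open>D and D' differ by an integer combination z of vertex firings.\<close>
definition div_equiv :: "('v,'e) mgraph \<Rightarrow> ('v \<Rightarrow> int) \<Rightarrow> ('v \<Rightarrow> int) \<Rightarrow> bool" where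
  "div_equiv G D D' \<longleftrightarrow> (\<exists>z :: 'v \<Rightarrow> int. \<forall>w\<in>verts G.
      D' w = D w + (\<Sum>e\<in>inc G w. z (other G e w) - z w))"

definition pic_class :: "('v,'e) mgraph \<Rightarrow> ('v \<Rightarrow> int) \<Rightarrow> ('v \<Rightarrow> int) set" where
  "pic_class G D = {D' \<in> Div0 G. div_equiv G D D'}"

definition Pic0 :: "('v,'e) mgraph \<Rightarrow> ('v \<Rightarrow> int) set monoid" where
  "Pic0 G = \<lparr> carrier = pic_class G ` Div0 G,
              mult = (\<lambda>A B. {(\<lambda>w. a w + b w) | a b. a \<in> A \<and> b \<in> B}),
              one = pic_class G (\<lambda>_. 0) \<rparr>"

text \<open>r orients the tree T towards v: r u is the outgoing (rotor) edge at u \<noteq> v.\<close>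
definition oriented_towards ::
  "('v,'e) mgraph \<Rightarrow> 'e set \<Rightarrow> 'v \<Rightarrow> ('v \<Rightarrow> 'e) \<Rightarrow> bool" where
  "oriented_towards G T v r \<longleftrightarrow> (\<forall>u\<in>verts G - {v}. r u \<in> T \<and> u \<in> endpts G (r u) \<and>
      (\<exists>n. ((\<lambda>x. other G (r x) x) ^^ n) u = v))"

definition rr_step :: "('v,'e) mgraph \<Rightarrow> ('v \<Rightarrow> 'e \<Rightarrow> 'e) \<Rightarrow> 'v \<Rightarrow>
    ('v \<Rightarrow> int) \<times> ('v \<Rightarrow> 'e) \<Rightarrow> ('v \<Rightarrow> int) \<times> ('v \<Rightarrow> 'e) \<Rightarrow> bool" where
  "rr_step G \<rho> v s s' \<longleftrightarrow> (\<exists>u\<in>verts G. u \<noteq> v \<and> fst s u > 0 \<and>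
      (let e = \<rho> u (snd s u); w = other G e u in
         snd s' = (snd s)(u := e) \<and>
         fst s' = ((fst s)(u := fst s u - 1))(w := fst s w + 1)))"

definition rotor_routing :: "('v,'e) mgraph \<Rightarrow> ('v \<Rightarrow> 'e \<Rightarrow> 'e) \<Rightarrow> 'v \<Rightarrow>
    ('v \<Rightarrow> int) set \<Rightarrow> 'e set \<Rightarrow> 'e set" where
  "rotor_routing G \<rho> v S T = (THE T'. \<exists>D r0 D' r'.
      D \<in> S \<and> (\<forall>u\<in>verts G - {v}. 0 \<le> D u) \<and> oriented_towards G T v r0 \<and>
      (rr_step G \<rho> v)\<^sup>*\<^sup>* (D, r0) (D', r') \<and> (\<forall>u\<in>verts G - {v}. D' u = 0) \<and>
      T' = r' ` (verts G - {v}))"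

definition bern_step :: "('v,'e) mgraph \<Rightarrow> ('v \<Rightarrow> 'e \<Rightarrow> 'e) \<Rightarrow> 'e set \<Rightarrow>
    'e \<times> 'v \<Rightarrow> 'e \<times> 'v" where
  "bern_step G \<rho> T h = (let e = fst h; u = snd h in
     if e \<in> T then (let w = other G e u in (\<rho> w e, w)) else (\<rho> u e, u))"

definition bern_tour :: "('v,'e) mgraph \<Rightarrow> ('v \<Rightarrow> 'e \<Rightarrow> 'e) \<Rightarrow> 'v \<Rightarrow> 'e set \<Rightarrow> nat \<Rightarrow> 'e \<times> 'v" where
  "bern_tour G \<rho> v T n = (bern_step G \<rho> T ^^ n) (SOME e. e \<in> inc G v, v)"

definition bern_len :: "('v,'e) mgraph \<Rightarrow> ('v \<Rightarrow> 'e \<Rightarrow> 'e) \<Rightarrow> 'v \<Rightarrow> 'e set \<Rightarrow> nat" where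
  "bern_len G \<rho> v T = (LEAST n. n > 0 \<and> bern_tour G \<rho> v T n = bern_tour G \<rho> v T 0)"

text \<open>The divisor D_T: a chip on vertex w for each step at a half-edge (e',w) with e' not in T
  whose other half-edge has not been visited before.\<close>
definition bern_div :: "('v,'e) mgraph \<Rightarrow> ('v \<Rightarrow> 'e \<Rightarrow> 'e) \<Rightarrow> 'v \<Rightarrow> 'e set \<Rightarrow> 'v \<Rightarrow> int" where
  "bern_div G \<rho> v T w = int (card {n. n < bern_len G \<rho> v T \<and>
      (let h = bern_tour G \<rho> v T n in
         fst h \<notin> T \<and> snd h = w \<and>
         (fst h, other G (fst h) (snd h)) \<notin> bern_tour G \<rho> v T ` {..<n})})"

definition bernardi :: "('v,'e) mgraph \<Rightarrow> ('v \<Rightarrow> 'e \<Rightarrow> 'e) \<Rightarrow> 'v \<Rightarrow>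
    ('v \<Rightarrow> int) set \<Rightarrow> 'e set \<Rightarrow> 'e set" where
  "bernardi G \<rho> v S T = (THE T'. T' \<in> spanning_trees G \<and>
      (\<lambda>w. bern_div G \<rho> v T' w - bern_div G \<rho> v T w) \<in> S)"

datatype torsor_kind = RotorRouting | Bernardi

fun torsor :: "torsor_kind \<Rightarrow> ('v,'e) mgraph \<Rightarrow> ('v \<Rightarrow> 'e \<Rightarrow> 'e) \<Rightarrow> 'v \<Rightarrow>
    ('v \<Rightarrow> int) set \<Rightarrow> 'e set \<Rightarrow> 'e set" where
  "torsor RotorRouting = rotor_routing"
| "torsor Bernardi = bernardi"

definition half_edges :: "('v,'e) mgraph \<Rightarrow> ('e \<times> 'v) set" where
  "half_edges G = {(e, u). e \<in> edges G \<and> u \<in> endpts G e}"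

text \<open>(e,u) = edge e leaving u; maps to the edge following e at the other endpoint.\<close>
definition face_perm :: "('v,'e) mgraph \<Rightarrow> ('v \<Rightarrow> 'e \<Rightarrow> 'e) \<Rightarrow> 'e \<times> 'v \<Rightarrow> 'e \<times> 'v" where
  "face_perm G \<rho> h = (let u' = other G (fst h) (snd h) in (\<rho> u' (fst h), u'))"

definition cyc :: "('v,'e) mgraph \<Rightarrow> ('v \<Rightarrow> 'e \<Rightarrow> 'e) \<Rightarrow> nat" where
  "cyc G \<rho> = card {{(face_perm G \<rho> ^^ n) h | n. True} | h. h \<in> half_edges G}"

definition genus :: "('v,'e) mgraph \<Rightarrow> ('v \<Rightarrow> 'e \<Rightarrow> 'e) \<Rightarrow> int" where
  "genus G \<rho> = (2 - int (card (verts G)) + int (card (edges G)) - int (cyc G \<rho>)) div 2"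

end

theory Submission
  imports Defs "HOL-Combinatorics.Orbits"
begin

text \<open>Everything happens on the dipole with five parallel edges. Its spanning trees are the
  single edges and its \<open>Pic\<^sup>0\<close> is \<open>\<int>/5\<close>. On a ribbon dipole both torsors merely rotate
  the tree edge \<open>t\<close>: rotor routing with basepoint \<open>v\<close> applies the rotation at the other
  vertex \<open>\<plusminus>k\<close> times, the Bernardi torsor applies the rotation at \<open>v\<close> itself \<open>\<plusminus>k\<close> times.
  Replacing every rotation by its square, again a 5-cycle, and the class \<open>k\<close> by \<open>3 k\<close>
  (\<open>3 = 2\<^sup>-\<^sup>1\<close> mod 5) therefore changes neither torsor. It does change the faces: the
  rotation system \<open>rot5\<close> has one face (genus 2), its square has three (genus 1).\<close>

definition cyclic_rotation :: "('a \<Rightarrow> 'a) \<Rightarrow> 'a set \<Rightarrow> bool" where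
  "cyclic_rotation f A \<longleftrightarrow> bij_betw f A A \<and> (\<forall>x\<in>A. \<forall>y\<in>A. \<exists>m. (f ^^ m) x = y)"

lemma cyclic_rotation_funpow_in:
  "cyclic_rotation f A \<Longrightarrow> x \<in> A \<Longrightarrow> (f ^^ m) x \<in> A"
  unfolding cyclic_rotation_def using bij_betw_funpow bij_betwE by metis

lemma cyclic_rotation_orbit:
  assumes f: "cyclic_rotation f A" and "finite A" and x: "x \<in> A"
  shows "bij_betw (\<lambda>i. (f ^^ i) x) {..<card A} A" and "(f ^^ card A) x = x"
proof -
  let ?p = "funpow_dist1 f x x"
  obtain m where "(f ^^ m) (f x) = x"
    using f x cyclic_rotation_funpow_in[of f A x 1] unfolding cyclic_rotation_def by auto
  then have "(f ^^ Suc m) x = x" by (simp add: funpow_swap1)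
  then have orb: "x \<in> orbit f x" unfolding orbit_altdef by (intro CollectI exI[of _ "Suc m"]) simp
  then have per: "(f ^^ ?p) x = x" by (rule funpow_dist1_prop)
  have "(\<lambda>i. (f ^^ i) x) ` {..<?p} = A"
  proof
    show "(\<lambda>i. (f ^^ i) x) ` {..<?p} \<subseteq> A"
      using cyclic_rotation_funpow_in[OF f x] by blast
    show "A \<subseteq> (\<lambda>i. (f ^^ i) x) ` {..<?p}"
    proof
      fix y assume "y \<in> A"
      then obtain i where "(f ^^ i) x = y" using f x unfolding cyclic_rotation_def by blast
      then have "(f ^^ (i mod ?p)) x = y" using funpow_mod_eq[OF per] by simp
      then show "y \<in> (\<lambda>i. (f ^^ i) x) ` {..<?p}" by force
    qed
  qed
  moreover have "inj_on (\<lambda>i. (f ^^ i) x) {..<?p}"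
    using inj_on_funpow_dist1[OF orb] by (simp add: atLeast0LessThan)
  ultimately have bij: "bij_betw (\<lambda>i. (f ^^ i) x) {..<?p} A" by (simp add: bij_betw_def)
  then have "?p = card A" using bij_betw_same_card by fastforce
  then show "bij_betw (\<lambda>i. (f ^^ i) x) {..<card A} A" and "(f ^^ card A) x = x"
    using bij per by simp_all
qed

lemma cyclic_rotation_funpow_eq_iff:
  assumes f: "cyclic_rotation f A" and "finite A" and x: "x \<in> A"
  shows "(f ^^ i) x = (f ^^ j) x \<longleftrightarrow> i mod card A = j mod card A"
proof -
  have "(f ^^ i) x = (f ^^ (i mod card A)) x" for i
    using funpow_mod_eq[OF cyclic_rotation_orbit(2)[OF assms]] by simp
  moreover have "card A > 0" using x \<open>finite A\<close> card_gt_0_iff by blast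
  ultimately show ?thesis
    using bij_betw_imp_inj_on[OF cyclic_rotation_orbit(1)[OF assms]]
    by (metis inj_on_eq_iff lessThan_iff mod_less_divisor)
qed

lemma cyclic_rotationI:
  assumes per: "(f ^^ n) x = x" and "0 < n" and A: "A = (\<lambda>i. (f ^^ i) x) ` {..<n}"
  shows "cyclic_rotation f A"
proof -
  have pow: "(f ^^ i) x = (f ^^ (i mod n)) x" for i using funpow_mod_eq[OF per] by simp
  have mem: "(f ^^ i) x \<in> A" for i
    unfolding A pow[of i] using \<open>0 < n\<close> by simp
  have "A \<subseteq> f ` A"
  proof
    fix y assume "y \<in> A"
    then obtain i where y: "y = (f ^^ i) x" using A by blast
    have "y = (f ^^ Suc (i + n - 1)) x"
      using \<open>0 < n\<close> pow[of i] pow[of "i + n"] by (simp add: y)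
    then have "y = f ((f ^^ (i + n - 1)) x)" by simp
    then show "y \<in> f ` A" using mem by blast
  qed
  moreover have "f ` A \<subseteq> A"
  proof
    fix y assume "y \<in> f ` A"
    then obtain i where "y = (f ^^ Suc i) x" using A by auto
    then show "y \<in> A" using mem by blast
  qed
  ultimately have "f ` A = A" by blast
  then have "bij_betw f A A"
    using A by (simp add: bij_betw_def eq_card_imp_inj_on)
  moreover have "\<exists>m. (f ^^ m) y = z" if "y \<in> A" "z \<in> A" for y z
  proof -
    obtain i where "i < n" "y = (f ^^ i) x" using A \<open>y \<in> A\<close> by blast
    moreover obtain k where "z = (f ^^ k) x" using A \<open>z \<in> A\<close> by blast
    ultimately have "(f ^^ (n - i + k)) y = (f ^^ (n - i + k + i)) x"
      by (simp only: funpow_add o_apply)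
    also have "\<dots> = (f ^^ (k + n)) x"
      using \<open>i < n\<close> by (intro arg_cong[where f="\<lambda>m. (f ^^ m) x"]) simp
    also have "\<dots> = z"
      using per \<open>z = (f ^^ k) x\<close> by (simp add: funpow_add)
    finally have "(f ^^ (n - i + k)) y = z" .
    then show ?thesis by blast
  qed
  ultimately show ?thesis unfolding cyclic_rotation_def by blast
qed

lemma funpow_scaled_exponent:
  fixes a :: nat and b s :: int
  assumes per: "(f ^^ n) x = x" and "0 < n" and ab: "(int a * b) mod int n = 1 mod int n"
  shows "((f ^^ a) ^^ nat ((b * s) mod int n)) x = (f ^^ nat (s mod int n)) x"
proof -
  have "int ((a * nat ((b * s) mod int n)) mod n) = (int a * ((b * s) mod int n)) mod int n"
    using \<open>0 < n\<close> by (simp add: zmod_int)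
  also have "\<dots> = ((int a * b) mod int n * s) mod int n"
    by (simp add: mod_mult_right_eq mod_mult_left_eq mult.assoc)
  also have "\<dots> = s mod int n"
    by (simp add: ab mod_mult_left_eq)
  finally have "(a * nat ((b * s) mod int n)) mod n = nat (s mod int n)" by linarith
  then show ?thesis
    by (metis funpow_mult funpow_mod_eq[OF per])
qed

lemma mod_eq_iff_uminus_mod_eq: "x mod m = y mod m \<longleftrightarrow> (- x) mod m = (- y) mod (m :: int)"
  by (metis mod_minus_cong minus_minus)

lemma cyclic_rotation_funpow:
  assumes f: "cyclic_rotation f A" and "finite A"
    and ab: "(int a * b) mod int (card A) = 1 mod int (card A)"
  shows "cyclic_rotation (f ^^ a) A"
  unfolding cyclic_rotation_def
proof (intro conjI ballI)
  show "bij_betw (f ^^ a) A A" using f unfolding cyclic_rotation_def by (simp add: bij_betw_funpow)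
  fix x y assume x: "x \<in> A" and "y \<in> A"
  then obtain i where y: "(f ^^ i) x = y" using f unfolding cyclic_rotation_def by blast
  have "card A > 0" using x \<open>finite A\<close> card_gt_0_iff by blast
  then have "((f ^^ a) ^^ nat ((b * int i) mod int (card A))) x = (f ^^ (i mod card A)) x"
    using funpow_scaled_exponent[OF cyclic_rotation_orbit(2)[OF f \<open>finite A\<close> x] _ ab]
    by (metis nat_int zmod_int)
  also have "\<dots> = y" using funpow_mod_eq[OF cyclic_rotation_orbit(2)[OF f \<open>finite A\<close> x]] y by simp
  finally show "\<exists>m. ((f ^^ a) ^^ m) x = y" ..
qed

lemma funpow_numeral: "(f ^^ numeral k) x = (f ^^ pred_numeral k) (f x)"
  by (simp add: numeral_eq_Suc funpow_swap1)

lemma funpow_orbit_eqI: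
  assumes "f ` S \<subseteq> S" and "x \<in> S" and "S \<subseteq> (\<lambda>m. (f ^^ m) x) ` {..<p}"
  shows "{(f ^^ m) x | m. True} = S"
proof -
  have "(f ^^ m) x \<in> S" for m by (induction m) (use assms(1,2) in auto)
  then show ?thesis using assms(3) by auto
qed

definition dipole :: "nat \<Rightarrow> (nat, nat) mgraph" where
  "dipole n = \<lparr>verts = {0, 1}, edges = {..<n}, endpts = (\<lambda>_. {0, 1})\<rparr>"

lemma dipole_simps [simp]:
  "verts (dipole n) = {0, 1}" "edges (dipole n) = {..<n}" "endpts (dipole n) e = {0, 1}"
  by (simp_all add: dipole_def)

lemma other_dipole [simp]: "u \<in> {0, 1} \<Longrightarrow> other (dipole n) e u = 1 - u"
  unfolding other_def by (rule the_equality) auto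

lemma inc_dipole [simp]: "u \<in> {0, 1} \<Longrightarrow> inc (dipole n) u = {..<n}"
  unfolding inc_def by auto

lemma connected_by_dipole: "connected_by (dipole n) F \<longleftrightarrow> F \<noteq> {}"
proof
  assume "connected_by (dipole n) F"
  then have "(adj (dipole n) F)\<^sup>*\<^sup>* 0 1" unfolding connected_by_def by simp
  then show "F \<noteq> {}" by (cases rule: converse_rtranclpE) (auto simp: adj_def)
next
  assume "F \<noteq> {}"
  then have "adj (dipole n) F 0 1" "adj (dipole n) F 1 0" by (auto simp: adj_def insert_commute)
  then show "connected_by (dipole n) F" unfolding connected_by_def by auto
qed

lemma spanning_trees_dipole: "spanning_trees (dipole n) = {{t} | t. t < n}"
  unfolding spanning_trees_def connected_by_dipole
  by (auto 4 3 simp: subset_singleton_iff dest: singleton_iff[THEN iffD1])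

lemma ribbon_graph_dipoleI:
  assumes "0 < n" and "\<And>u. u \<in> {0, 1} \<Longrightarrow> cyclic_rotation (\<rho> u) {..<n}"
  shows "ribbon_graph (dipole n) \<rho>"
  using assms unfolding ribbon_graph_def graph_def cyclic_rotation_def
  by (auto simp: connected_by_dipole)

lemma half_edges_dipole: "half_edges (dipole n) = {..<n} \<times> {0, 1}"
  unfolding half_edges_def by auto

lemma face_perm_dipole:
  "w \<in> {0, 1} \<Longrightarrow> face_perm (dipole n) \<rho> (e, w) = (\<rho> (1 - w) e, 1 - w)"
  by (simp add: face_perm_def Let_def)

section \<open>The Picard group of a dipole\<close>

definition dipole_class :: "nat \<Rightarrow> int \<Rightarrow> (nat \<Rightarrow> int) set" where
  "dipole_class n k = {D \<in> Div0 (dipole n). D 0 mod int n = k mod int n}"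

definition dipole_divisor :: "int \<Rightarrow> nat \<Rightarrow> int" where
  "dipole_divisor k w = (if w = 0 then k else if w = 1 then - k else 0)"

lemma Div0_dipole: "Div0 (dipole n) = {D. (\<forall>w. w \<notin> {0, 1} \<longrightarrow> D w = 0) \<and> D 0 + D 1 = 0}"
  unfolding Div0_def by simp

lemma dipole_divisor_in_class: "dipole_divisor k \<in> dipole_class n k"
  by (simp add: dipole_class_def Div0_dipole dipole_divisor_def)

lemma div_equiv_dipole:
  assumes "D \<in> Div0 (dipole n)" "D' \<in> Div0 (dipole n)"
  shows "div_equiv (dipole n) D D' \<longleftrightarrow> D 0 mod int n = D' 0 mod int n"
proof -
  have firing: "(\<Sum>e\<in>inc (dipole n) w. z (other (dipole n) e w) - z w) = int n * (z (1 - w) - z w)"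
    if "w \<in> {0, 1}" for w and z :: "nat \<Rightarrow> int"
    using that by simp
  have D1: "D 1 = - D 0" "D' 1 = - D' 0" using assms by (auto simp: Div0_dipole)
  have "div_equiv (dipole n) D D' \<longleftrightarrow> (\<exists>z :: nat \<Rightarrow> int. D' 0 = D 0 + int n * (z 1 - z 0))"
    unfolding div_equiv_def using D1 by (auto simp: firing algebra_simps)
  also have "\<dots> \<longleftrightarrow> int n dvd D' 0 - D 0"
  proof
    assume "int n dvd D' 0 - D 0"
    then obtain q where "D' 0 - D 0 = int n * q" by (elim dvdE)
    then show "\<exists>z :: nat \<Rightarrow> int. D' 0 = D 0 + int n * (z 1 - z 0)"
      by (intro exI[of _ "\<lambda>w. if w = 1 then q else 0"]) simp
  qed auto
  also have "\<dots> \<longleftrightarrow> D 0 mod int n = D' 0 mod int n"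
    by (simp add: mod_eq_dvd_iff dvd_diff_commute)
  finally show ?thesis .
qed

lemma pic_class_dipole: "D \<in> Div0 (dipole n) \<Longrightarrow> pic_class (dipole n) D = dipole_class n (D 0)"
  unfolding pic_class_def dipole_class_def by (auto simp: div_equiv_dipole)

lemma carrier_Pic0_dipole: "carrier (Pic0 (dipole n)) = range (dipole_class n)"
proof -
  have "dipole_class n k = pic_class (dipole n) (dipole_divisor k)" for k
    using pic_class_dipole[of "dipole_divisor k"] dipole_divisor_in_class[of k n]
    by (simp add: dipole_divisor_def dipole_class_def)
  moreover have "dipole_divisor k \<in> Div0 (dipole n)" for k
    using dipole_divisor_in_class unfolding dipole_class_def by blast
  ultimately show ?thesis
    unfolding Pic0_def by (auto simp: pic_class_dipole)
qed

lemma dipole_class_eq_iff: "dipole_class n i = dipole_class n j \<longleftrightarrow> i mod int n = j mod int n"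
proof
  assume "dipole_class n i = dipole_class n j"
  then have "dipole_divisor i \<in> dipole_class n j" using dipole_divisor_in_class by blast
  then show "i mod int n = j mod int n" by (simp add: dipole_class_def dipole_divisor_def)
qed (simp add: dipole_class_def)

lemma mult_Pic0_dipole:
  "dipole_class n i \<otimes>\<^bsub>Pic0 (dipole n)\<^esub> dipole_class n j = dipole_class n (i + j)"
proof -
  have "{(\<lambda>w. a w + b w) | a b. a \<in> dipole_class n i \<and> b \<in> dipole_class n j} =
      dipole_class n (i + j)"
  proof (intro equalityI subsetI)
    fix x assume "x \<in> {(\<lambda>w. a w + b w) | a b. a \<in> dipole_class n i \<and> b \<in> dipole_class n j}"
    then obtain a b where "x = (\<lambda>w. a w + b w)" "a \<in> dipole_class n i" "b \<in> dipole_class n j"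
      by blast
    then show "x \<in> dipole_class n (i + j)"
      by (auto simp: dipole_class_def Div0_dipole intro: mod_add_cong)
  next
    fix D assume D: "D \<in> dipole_class n (i + j)"
    define b where "b = (\<lambda>w. D w - dipole_divisor i w)"
    have "(D 0 - i) mod int n = (i + j - i) mod int n"
      using D by (intro mod_diff_cong) (simp_all add: dipole_class_def)
    then have "b \<in> dipole_class n j"
      using D by (auto simp: b_def dipole_class_def Div0_dipole dipole_divisor_def)
    moreover have "D = (\<lambda>w. dipole_divisor i w + b w)" by (simp add: b_def)
    ultimately show "D \<in> {(\<lambda>w. a w + b w) | a b. a \<in> dipole_class n i \<and> b \<in> dipole_class n j}"
      using dipole_divisor_in_class by blast
  qed
  then show ?thesis unfolding Pic0_def by simp
qed

definition dipole_scale :: "nat \<Rightarrow> int \<Rightarrow> (nat \<Rightarrow> int) set \<Rightarrow> (nat \<Rightarrow> int) set" where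
  "dipole_scale n b S = dipole_class n (b * (SOME k. S = dipole_class n k))"

lemma dipole_scale_class: "dipole_scale n b (dipole_class n k) = dipole_class n (b * k)"
proof -
  have "dipole_class n k = dipole_class n (SOME k'. dipole_class n k = dipole_class n k')"
    by (rule someI) (rule refl)
  then show ?thesis
    unfolding dipole_scale_def dipole_class_eq_iff by (metis mod_mult_right_eq)
qed

lemma dipole_scale_iso:
  assumes ab: "(int a * b) mod int n = 1 mod int n"
  shows "dipole_scale n b \<in> iso (Pic0 (dipole n)) (Pic0 (dipole n))"
proof -
  have "dipole_scale n b \<in> hom (Pic0 (dipole n)) (Pic0 (dipole n))"
    by (rule homI) (auto simp: carrier_Pic0_dipole dipole_scale_class mult_Pic0_dipole distrib_left)
  moreover have "inj_on (dipole_scale n b) (range (dipole_class n))"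
  proof (rule inj_onI, clarify)
    fix i j assume "dipole_scale n b (dipole_class n i) = dipole_scale n b (dipole_class n j)"
    then have "(b * i) mod int n = (b * j) mod int n"
      by (simp add: dipole_scale_class dipole_class_eq_iff)
    then have "(int a * b * i) mod int n = (int a * b * j) mod int n"
      by (metis mod_mult_right_eq mult.assoc)
    then show "dipole_class n i = dipole_class n j"
      unfolding dipole_class_eq_iff by (metis ab mod_mult_left_eq mult_1)
  qed
  moreover have "dipole_class n k \<in> dipole_scale n b ` range (dipole_class n)" for k
  proof -
    have "(b * (int a * k)) mod int n = k mod int n"
      by (metis ab mod_mult_left_eq mult.assoc mult.commute mult_1)
    then have "dipole_scale n b (dipole_class n (int a * k)) = dipole_class n k"
      by (simp add: dipole_scale_class dipole_class_eq_iff)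
    then show ?thesis by blast
  qed
  ultimately show ?thesis
    unfolding iso_def bij_betw_def carrier_Pic0_dipole
    by (auto simp: dipole_scale_class)
qed

section \<open>Rotor routing on a dipole\<close>

lemma oriented_towards_dipole:
  assumes "v \<in> {0, 1}"
  shows "oriented_towards (dipole n) {t} v r \<longleftrightarrow> r (1 - v) = t"
proof -
  have verts: "verts (dipole n) - {v} = {1 - v}" and u: "1 - v \<in> {0, 1}" using assms by auto
  have "((\<lambda>x. other (dipole n) (r x) x) ^^ 1) (1 - v) = v" using assms by auto
  then have "\<exists>m. ((\<lambda>x. other (dipole n) (r x) x) ^^ m) (1 - v) = v" ..
  then show ?thesis
    unfolding oriented_towards_def verts using u by (simp del: insert_iff add: singleton_iff)
qed

lemma rr_step_dipole_iff:
  assumes v: "v \<in> {0, 1}"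
  shows "rr_step (dipole n) \<rho> v (D, r) s' \<longleftrightarrow> 0 < D (1 - v) \<and>
    s' = (D(1 - v := D (1 - v) - 1, v := D v + 1), r(1 - v := \<rho> (1 - v) (r (1 - v))))"
proof -
  have ex: "(\<exists>u\<in>verts (dipole n). u \<noteq> v \<and> P u) \<longleftrightarrow> P (1 - v)" for P
    using v by auto
  have other: "other (dipole n) e (1 - v) = v" for e
    using v by auto
  show ?thesis
    unfolding rr_step_def Let_def ex other by (cases s') auto
qed

lemma rr_steps_dipole_iff:
  assumes v: "v \<in> {0, 1}" and "0 \<le> D (1 - v)"
  shows "(rr_step (dipole n) \<rho> v)\<^sup>*\<^sup>* (D, r) s' \<longleftrightarrow> (\<exists>j. int j \<le> D (1 - v) \<and>
    s' = (D(1 - v := D (1 - v) - int j, v := D v + int j),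
          r(1 - v := (\<rho> (1 - v) ^^ j) (r (1 - v)))))"
    (is "?steps s' \<longleftrightarrow> (\<exists>j. ?run j s')")
proof
  assume "?steps s'"
  then show "\<exists>j. ?run j s'"
  proof (induction rule: rtranclp_induct)
    case base
    show ?case using \<open>0 \<le> D (1 - v)\<close> by (intro exI[of _ 0]) simp
  next
    case (step s s')
    then obtain j where "?run j s" by blast
    then show ?case
      using step.hyps(2) v by (intro exI[of _ "Suc j"]) (auto simp: rr_step_dipole_iff)
  qed
next
  assume "\<exists>j. ?run j s'"
  then obtain j where "?run j s'" ..
  then show "?steps s'"
  proof (induction j arbitrary: s')
    case 0
    then show ?case by simp
  next
    case (Suc j)
    let ?s = "(D(1 - v := D (1 - v) - int j, v := D v + int j),
      r(1 - v := (\<rho> (1 - v) ^^ j) (r (1 - v))))"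
    have "?steps ?s" using Suc.prems by (intro Suc.IH) (auto simp: fun_eq_iff)
    moreover have "rr_step (dipole n) \<rho> v ?s s'"
      using Suc.prems v by (auto simp: rr_step_dipole_iff)
    ultimately show ?case ..
  qed
qed

lemma rotor_routing_runs_dipole:
  assumes v: "v \<in> {0, 1}"
  shows "(\<exists>D r0 D' r'. D \<in> S \<and> (\<forall>u\<in>verts (dipole n) - {v}. 0 \<le> D u) \<and>
      oriented_towards (dipole n) {t} v r0 \<and> (rr_step (dipole n) \<rho> v)\<^sup>*\<^sup>* (D, r0) (D', r') \<and>
      (\<forall>u\<in>verts (dipole n) - {v}. D' u = 0) \<and> T' = r' ` (verts (dipole n) - {v})) \<longleftrightarrow>
    (\<exists>D\<in>S. 0 \<le> D (1 - v) \<and> T' = {(\<rho> (1 - v) ^^ nat (D (1 - v))) t})"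
    (is "?runs \<longleftrightarrow> _")
proof
  have verts: "verts (dipole n) - {v} = {1 - v}" using v by auto
  assume ?runs
  then obtain D r0 D' r' where "D \<in> S" and D: "0 \<le> D (1 - v)"
    and r0: "oriented_towards (dipole n) {t} v r0"
    and run: "(rr_step (dipole n) \<rho> v)\<^sup>*\<^sup>* (D, r0) (D', r')"
    and "D' (1 - v) = 0" and T': "T' = r' ` {1 - v}"
    unfolding verts by blast
  moreover obtain j where "D (1 - v) = int j" and "r' (1 - v) = (\<rho> (1 - v) ^^ j) (r0 (1 - v))"
    using run \<open>D' (1 - v) = 0\<close> v by (auto simp: rr_steps_dipole_iff[where D = D, OF v D])
  ultimately have "T' = {(\<rho> (1 - v) ^^ nat (D (1 - v))) t}"
    using v by (auto simp: oriented_towards_dipole)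
  then show "\<exists>D\<in>S. 0 \<le> D (1 - v) \<and> T' = {(\<rho> (1 - v) ^^ nat (D (1 - v))) t}"
    using \<open>D \<in> S\<close> D by blast
next
  have verts: "verts (dipole n) - {v} = {1 - v}" using v by auto
  assume "\<exists>D\<in>S. 0 \<le> D (1 - v) \<and> T' = {(\<rho> (1 - v) ^^ nat (D (1 - v))) t}"
  then obtain D where "D \<in> S" and D: "0 \<le> D (1 - v)"
    and T': "T' = {(\<rho> (1 - v) ^^ nat (D (1 - v))) t}" by blast
  let ?r' = "(\<lambda>_. t)(1 - v := (\<rho> (1 - v) ^^ nat (D (1 - v))) t)"
  have "(rr_step (dipole n) \<rho> v)\<^sup>*\<^sup>* (D, \<lambda>_. t) (D(1 - v := 0, v := D v + D (1 - v)), ?r')"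
    using D by (simp add: rr_steps_dipole_iff[where D = D, OF v D] exI[of _ "nat (D (1 - v))"])
  moreover have "oriented_towards (dipole n) {t} v (\<lambda>_. t)"
    using v by (simp add: oriented_towards_dipole)
  moreover have "T' = ?r' ` {1 - v}" using T' by simp
  moreover have "\<forall>u\<in>{1 - v}. 0 \<le> D u" "\<forall>u\<in>{1 - v}. (D(1 - v := 0, v := D v + D (1 - v))) u = 0"
    using D v by auto
  ultimately show ?runs
    unfolding verts using \<open>D \<in> S\<close> by blast
qed

lemma rotor_routing_dipole:
  assumes v: "v \<in> {0, 1}" and "0 < n" and per: "(\<rho> (1 - v) ^^ n) t = t"
  shows "rotor_routing (dipole n) \<rho> v (dipole_class n k) {t} =
    {(\<rho> (1 - v) ^^ nat ((if v = 1 then k else - k) mod int n)) t}"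
proof -
  define s where "s = (if v = 1 then k else - k)"
  have residue: "D (1 - v) mod int n = s mod int n" if "D \<in> dipole_class n k" for D
  proof -
    have "D 1 = - D 0" "D 0 mod int n = k mod int n"
      using that by (auto simp: dipole_class_def Div0_dipole)
    then show ?thesis using v by (auto simp: s_def intro: mod_minus_cong)
  qed
  show ?thesis
    unfolding rotor_routing_def rotor_routing_runs_dipole[OF v] s_def[symmetric]
  proof (rule the_equality)
    define D where "D w = (if w = 1 - v then s mod int n else if w = v then - (s mod int n) else 0)"
      for w
    have "D 0 mod int n = k mod int n"
      using v by (auto simp: D_def s_def mod_minus_eq)
    then have "D \<in> dipole_class n k"
      using v by (auto simp: D_def dipole_class_def Div0_dipole)
    moreover have "D (1 - v) = s mod int n" by (simp add: D_def)
    ultimately show "\<exists>D\<in>dipole_class n k. 0 \<le> D (1 - v) \<and>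
        {(\<rho> (1 - v) ^^ nat (s mod int n)) t} = {(\<rho> (1 - v) ^^ nat (D (1 - v))) t}"
      using \<open>0 < n\<close> by (intro bexI[of _ D]) simp_all
  next
    fix T' assume "\<exists>D\<in>dipole_class n k. 0 \<le> D (1 - v) \<and> T' = {(\<rho> (1 - v) ^^ nat (D (1 - v))) t}"
    then obtain D where "D \<in> dipole_class n k" "0 \<le> D (1 - v)"
      and T': "T' = {(\<rho> (1 - v) ^^ nat (D (1 - v))) t}" by blast
    then have "nat (D (1 - v)) mod n = nat (s mod int n)"
      using residue by (metis nat_int nat_0_le zmod_int)
    then show "T' = {(\<rho> (1 - v) ^^ nat (s mod int n)) t}"
      using T' funpow_mod_eq[OF per] by metis
  qed
qed

section \<open>The Bernardi torsor on a dipole\<close>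

lemma bern_tour_Suc: "bern_tour G \<rho> v T (Suc i) = bern_step G \<rho> T (bern_tour G \<rho> v T i)"
  by (simp add: bern_tour_def)

lemma bern_step_dipole:
  "w \<in> {0, 1} \<Longrightarrow> bern_step (dipole n) \<rho> {t} (e, w) =
    (if e = t then (\<rho> (1 - w) e, 1 - w) else (\<rho> w e, w))"
  by (simp add: bern_step_def Let_def)

locale dipole_tour =
  fixes n :: nat and \<rho> :: "nat \<Rightarrow> nat \<Rightarrow> nat" and v e0 j t :: nat
  assumes v: "v \<in> {0, 1}"
    and rot: "\<And>w. w \<in> {0, 1} \<Longrightarrow> cyclic_rotation (\<rho> w) {..<n}"
    and e0: "e0 = (SOME e. e \<in> inc (dipole n) v)"
    and j: "j < n" and t: "t = (\<rho> v ^^ j) e0"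
begin

abbreviation tour :: "nat \<Rightarrow> nat \<times> nat" where
  "tour \<equiv> bern_tour (dipole n) \<rho> v {t}"

abbreviation root_arc :: "nat set" where
  "root_arc \<equiv> (\<lambda>i. (\<rho> v ^^ i) e0) ` {..j}"

definition chip_steps :: "nat \<Rightarrow> nat set" where
  "chip_steps w = {i. i < 2 * n \<and> fst (tour i) \<noteq> t \<and> snd (tour i) = w \<and>
     (fst (tour i), 1 - w) \<notin> tour ` {..<i}}"

lemma e0_less: "e0 < n"
  using j e0 v someI[of "\<lambda>e. e < n" 0] by simp

lemma rotation_funpow_less: "w \<in> {0, 1} \<Longrightarrow> x < n \<Longrightarrow> (\<rho> w ^^ i) x < n"
  using cyclic_rotation_funpow_in[OF rot] by blast

lemma rotation_funpow_eq_iff: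
  "w \<in> {0, 1} \<Longrightarrow> x < n \<Longrightarrow> (\<rho> w ^^ i) x = (\<rho> w ^^ i') x \<longleftrightarrow> i mod n = i' mod n"
  using cyclic_rotation_funpow_eq_iff[OF rot] by fastforce

lemma rotation_funpow_period: "w \<in> {0, 1} \<Longrightarrow> x < n \<Longrightarrow> (\<rho> w ^^ n) x = x"
  using rotation_funpow_eq_iff[of w x n 0] by simp

lemma t_less: "t < n"
  using rotation_funpow_less[OF v e0_less] t by simp

lemma t_in_root_arc: "t \<in> root_arc"
  using t by auto

lemma dipole_tour_shift: "dipole_tour n \<rho> v e0 ((j + m) mod n) ((\<rho> v ^^ m) t)"
proof
  show "(j + m) mod n < n" using j by simp
  show "(\<rho> v ^^ m) t = (\<rho> v ^^ ((j + m) mod n)) e0"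
    unfolding t funpow_mod_eq[OF rotation_funpow_period[OF v e0_less]]
    by (metis add.commute comp_apply funpow_add)
qed (use v rot e0 in auto)

lemma dipole_tour_tree_eq_iff: "dipole_tour n \<rho> v e0 j' t' \<Longrightarrow> t' = t \<longleftrightarrow> j' = j"
  using j rotation_funpow_eq_iff[OF v e0_less, of j' j] unfolding t dipole_tour_def by auto

text \<open>The tour turns around \<open>v\<close> from \<open>e0\<close> to \<open>t\<close>, crosses \<open>t\<close>, turns once completely
  around the other vertex, crosses \<open>t\<close> back and completes its turn around \<open>v\<close>.\<close>

lemma tour_eq:
  assumes "i \<le> 2 * n"
  shows "tour i =
    (if i \<le> j then ((\<rho> v ^^ i) e0, v)
     else if i \<le> j + n then ((\<rho> (1 - v) ^^ (i - j)) t, 1 - v)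
     else ((\<rho> v ^^ (i - n)) e0, v))"
  using assms
proof (induction i)
  case 0
  then show ?case using v by (simp add: bern_tour_def e0)
next
  case (Suc i)
  have u: "1 - v \<in> {0, 1}" and vu: "1 - (1 - v) = v" using v by auto
  have step_root: "bern_step (dipole n) \<rho> {t} ((\<rho> v ^^ m) e0, v) = ((\<rho> v ^^ Suc m) e0, v)"
    if "m < n" "m \<noteq> j" for m
    using that j e0_less v by (simp add: bern_step_dipole t rotation_funpow_eq_iff)
  consider "i < j" | "i = j" | "j < i" "i < j + n" | "i = j + n" | "j + n < i" by linarith
  then show ?case
  proof cases
    case 1
    then show ?thesis using Suc j by (simp add: bern_tour_Suc step_root)
  next
    case 2
    then show ?thesis using Suc j v t by (simp add: bern_tour_Suc bern_step_dipole)
  next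
    case 3
    then have "(\<rho> (1 - v) ^^ (i - j)) t \<noteq> t"
      using rotation_funpow_eq_iff[OF u t_less, of "i - j" 0] by simp
    then show ?thesis using 3 Suc u by (simp add: bern_tour_Suc bern_step_dipole Suc_diff_le)
  next
    case 4
    then have "tour i = (t, 1 - v)"
      using Suc rotation_funpow_period[OF u t_less] by simp
    then show ?thesis using 4 u vu t by (simp add: bern_tour_Suc bern_step_dipole)
  next
    case 5
    then show ?thesis using Suc j by (simp add: bern_tour_Suc step_root Suc_diff_le)
  qed
qed

lemma tour_root: "i \<le> j \<Longrightarrow> tour i = ((\<rho> v ^^ i) e0, v)"
  using j by (simp add: tour_eq)

lemma tour_far: "j < i \<Longrightarrow> i \<le> j + n \<Longrightarrow> tour i = ((\<rho> (1 - v) ^^ (i - j)) t, 1 - v)"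
  using j by (simp add: tour_eq)

lemma tour_far_visits:
  assumes "x < n"
  obtains i where "j < i" "i \<le> j + n" "tour i = (x, 1 - v)"
proof -
  have u: "1 - v \<in> {0, 1}" by auto
  have "(\<lambda>m. (\<rho> (1 - v) ^^ m) t) ` {..<n} = {..<n}"
    using cyclic_rotation_orbit(1)[OF rot[OF u] _, of t] t_less by (simp add: bij_betw_def)
  then have "x \<in> (\<lambda>m. (\<rho> (1 - v) ^^ m) t) ` {..<n}" using assms by simp
  then obtain m where "m < n" and x: "(\<rho> (1 - v) ^^ m) t = x" by auto
  define m' where "m' = (if m = 0 then n else m)"
  have "0 < m'" "m' \<le> n" using \<open>m < n\<close> by (auto simp: m'_def)
  moreover have "(\<rho> (1 - v) ^^ m') t = x"
    using rotation_funpow_period[OF u t_less] x by (cases "m = 0") (simp_all add: m'_def)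
  ultimately show ?thesis
    using tour_far[of "j + m'"] by (intro that[of "j + m'"]) simp_all
qed

lemma bern_len_dipole: "bern_len (dipole n) \<rho> v {t} = 2 * n"
  unfolding bern_len_def
proof (rule Least_equality)
  have "(\<rho> v ^^ n) e0 = e0" using rotation_funpow_period[OF v e0_less] .
  then show "0 < 2 * n \<and> tour (2 * n) = tour 0"
    using j by (simp add: tour_eq)
next
  fix m assume m: "0 < m \<and> tour m = tour 0"
  show "2 * n \<le> m"
  proof (rule ccontr)
    assume "\<not> 2 * n \<le> m"
    then have tour_m: "tour m = (e0, v)"
      using m by (simp add: tour_eq)
    have ne_e0: "(\<rho> v ^^ i) e0 \<noteq> e0" if "0 < i" "i < n" for i
      using that rotation_funpow_eq_iff[OF v e0_less, of i 0] by simp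
    show False
      using tour_m m j \<open>\<not> 2 * n \<le> m\<close> ne_e0[of m] ne_e0[of "m - n"] v
      by (auto simp: tour_eq split: if_splits)
  qed
qed

lemma bern_div_eq_card_chip_steps: "bern_div (dipole n) \<rho> v {t} w = int (card (chip_steps w))"
proof -
  have "(let h = tour i in fst h \<notin> {t} \<and> snd h = w \<and>
      (fst h, other (dipole n) (fst h) (snd h)) \<notin> tour ` {..<i}) \<longleftrightarrow>
    fst (tour i) \<noteq> t \<and> snd (tour i) = w \<and> (fst (tour i), 1 - w) \<notin> tour ` {..<i}"
    if "i < 2 * n" for i
  proof -
    have "snd (tour i) \<in> {0, 1}" using that v by (auto simp: tour_eq)
    then show ?thesis by (auto simp: Let_def)
  qed
  then show ?thesis
    unfolding bern_div_def bern_len_dipole chip_steps_def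
    by (intro arg_cong[where f="\<lambda>A. int (card A)"]) auto
qed

lemma chip_steps_root: "chip_steps v = {..<j}"
proof (intro equalityI subsetI)
  fix i assume "i \<in> chip_steps v"
  then have i: "i < 2 * n" "fst (tour i) \<noteq> t" "snd (tour i) = v"
    and unvisited: "(fst (tour i), 1 - v) \<notin> tour ` {..<i}" by (auto simp: chip_steps_def)
  show "i \<in> {..<j}"
  proof (rule ccontr)
    assume "i \<notin> {..<j}"
    then consider "i = j" | "j < i" "i \<le> j + n" | "j + n < i" by fastforce
    then show False
    proof cases
      case 1
      then show False using i(2) by (simp add: tour_root t[symmetric])
    next
      case 2
      then show False using i(3) v by (auto simp: tour_far)
    next
      case 3
      then have "fst (tour i) < n"
        using i rotation_funpow_less[OF v e0_less] by (simp add: tour_eq)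
      then obtain i' where "j < i'" "i' \<le> j + n" "tour i' = (fst (tour i), 1 - v)"
        by (rule tour_far_visits)
      then show False using unvisited 3 by (metis image_eqI le_less_trans lessThan_iff)
    qed
  qed
next
  fix i assume "i \<in> {..<j}"
  then have "i < j" by simp
  then have "\<forall>i'\<in>{..<i}. snd (tour i') = v" by (simp add: tour_root)
  moreover have "(\<rho> v ^^ i) e0 \<noteq> t"
    using \<open>i < j\<close> j by (simp add: t rotation_funpow_eq_iff[OF v e0_less])
  ultimately show "i \<in> chip_steps v"
    using \<open>i < j\<close> j v by (force simp: chip_steps_def tour_root)
qed

lemma chip_steps_far:
  "chip_steps (1 - v) = {i. j < i \<and> i < j + n \<and> (\<rho> (1 - v) ^^ (i - j)) t \<notin> root_arc}"
proof (intro equalityI subsetI)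
  have u: "1 - v \<in> {0, 1}" and vu: "1 - v \<noteq> v" using v by auto
  fix i assume "i \<in> chip_steps (1 - v)"
  then have i: "i < 2 * n" "fst (tour i) \<noteq> t" "snd (tour i) = 1 - v"
    and unvisited: "(fst (tour i), v) \<notin> tour ` {..<i}" using v by (auto simp: chip_steps_def)
  then have far: "j < i" "i \<le> j + n" using vu by (auto simp: tour_eq split: if_splits)
  moreover have "i \<noteq> j + n"
    using i(2) tour_far[OF far] rotation_funpow_period[OF u t_less] by auto
  moreover have "(\<rho> (1 - v) ^^ (i - j)) t \<notin> root_arc"
  proof
    assume "(\<rho> (1 - v) ^^ (i - j)) t \<in> root_arc"
    then obtain i' where "i' \<le> j" "tour i' = (fst (tour i), v)"
      using tour_root tour_far[OF far] by auto
    moreover have "tour i' \<in> tour ` {..<i}" using \<open>i' \<le> j\<close> far by auto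
    ultimately show False using unvisited by simp
  qed
  ultimately show "i \<in> {i. j < i \<and> i < j + n \<and> (\<rho> (1 - v) ^^ (i - j)) t \<notin> root_arc}" by simp
next
  have vu: "1 - v \<noteq> v" using v by auto
  fix i assume "i \<in> {i. j < i \<and> i < j + n \<and> (\<rho> (1 - v) ^^ (i - j)) t \<notin> root_arc}"
  then have i: "j < i" "i < j + n" "(\<rho> (1 - v) ^^ (i - j)) t \<notin> root_arc" by auto
  have "((\<rho> (1 - v) ^^ (i - j)) t, v) \<notin> tour ` {..<i}"
  proof
    assume "((\<rho> (1 - v) ^^ (i - j)) t, v) \<in> tour ` {..<i}"
    then obtain i' where "i' < i" and visit: "tour i' = ((\<rho> (1 - v) ^^ (i - j)) t, v)" by auto
    show False
    proof (cases "i' \<le> j")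
      case True
      then show False using i(3) tour_root[OF True] visit by auto
    next
      case False
      then show False using \<open>i' < i\<close> i tour_far[of i'] visit vu by simp
    qed
  qed
  then show "i \<in> chip_steps (1 - v)"
    using i t_in_root_arc j tour_far[of i] v by (auto simp: chip_steps_def)
qed

lemma card_chip_steps_far: "card (chip_steps (1 - v)) = n - Suc j"
proof -
  let ?g = "\<lambda>i. (\<rho> (1 - v) ^^ (i - j)) t"
  have u: "1 - v \<in> {0, 1}" by auto
  have "inj_on ?g (chip_steps (1 - v))"
  proof (rule inj_onI)
    fix a b assume "a \<in> chip_steps (1 - v)" "b \<in> chip_steps (1 - v)" "?g a = ?g b"
    then show "a = b"
      unfolding chip_steps_far using rotation_funpow_eq_iff[OF u t_less, of "a - j" "b - j"] by auto
  qed
  moreover have "?g ` chip_steps (1 - v) = {..<n} - root_arc"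
  proof (intro equalityI subsetI)
    fix x assume "x \<in> ?g ` chip_steps (1 - v)"
    then show "x \<in> {..<n} - root_arc"
      unfolding chip_steps_far using rotation_funpow_less[OF u t_less] by auto
  next
    fix x assume x: "x \<in> {..<n} - root_arc"
    then obtain i where "j < i" "i \<le> j + n" "tour i = (x, 1 - v)"
      using tour_far_visits by blast
    moreover have "x \<noteq> t" using x t_in_root_arc by auto
    ultimately have "x = ?g i" "i < j + n"
      using tour_far rotation_funpow_period[OF u t_less] by (auto simp: le_less)
    then show "x \<in> ?g ` chip_steps (1 - v)"
      unfolding chip_steps_far using x \<open>j < i\<close> by (intro image_eqI[of _ _ i]) auto
  qed
  moreover have "card root_arc = Suc j"
  proof -
    have "inj_on (\<lambda>i. (\<rho> v ^^ i) e0) {..j}"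
      using j by (intro inj_onI) (simp add: rotation_funpow_eq_iff[OF v e0_less])
    then show ?thesis by (simp add: card_image)
  qed
  moreover have "root_arc \<subseteq> {..<n}" using rotation_funpow_less[OF v e0_less] by auto
  ultimately show ?thesis
    by (metis card_Diff_subset card_image card_lessThan finite_lessThan finite_subset)
qed

lemma bern_div_dipole:
  "bern_div (dipole n) \<rho> v {t} =
    (\<lambda>w. if w = v then int j else if w = 1 - v then int (n - Suc j) else 0)"
proof
  fix w
  have "1 - v \<noteq> v" using v by auto
  moreover have "chip_steps w = {}" if "w \<noteq> v" "w \<noteq> 1 - v"
    using that by (auto simp: chip_steps_def tour_eq)
  ultimately show "bern_div (dipole n) \<rho> v {t} w =
      (if w = v then int j else if w = 1 - v then int (n - Suc j) else 0)"
    unfolding bern_div_eq_card_chip_steps using chip_steps_root card_chip_steps_far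
    by (cases "w = v"; cases "w = 1 - v") simp_all
qed

end

lemma bern_div_diff_in_dipole_class:
  assumes a: "dipole_tour n \<rho> v e0 ja a" and b: "dipole_tour n \<rho> v e0 jb b"
  shows "(\<lambda>w. bern_div (dipole n) \<rho> v {a} w - bern_div (dipole n) \<rho> v {b} w) \<in> dipole_class n k \<longleftrightarrow>
    (int ja - int jb) mod int n = (if v = 0 then k else - k) mod int n"
proof -
  have v: "v \<in> {0, 1}" and "ja < n" "jb < n" using a b unfolding dipole_tour_def by auto
  then have diff: "(\<lambda>w. bern_div (dipole n) \<rho> v {a} w - bern_div (dipole n) \<rho> v {b} w) =
      (\<lambda>w. if w = v then int ja - int jb else if w = 1 - v then int jb - int ja else 0)"
    unfolding dipole_tour.bern_div_dipole[OF a] dipole_tour.bern_div_dipole[OF b]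
    by (auto simp: fun_eq_iff of_nat_diff)
  from v show ?thesis
  proof
    assume "v = 0"
    then show ?thesis unfolding diff by (simp add: dipole_class_def Div0_dipole)
  next
    assume "v \<in> {1}"
    then show ?thesis
      unfolding diff
      by (simp add: dipole_class_def Div0_dipole mod_eq_iff_uminus_mod_eq[of "int jb - int ja"])
  qed
qed

lemma dipole_tour_exists:
  assumes v: "v \<in> {0, 1}" and rot: "\<And>w. w \<in> {0, 1} \<Longrightarrow> cyclic_rotation (\<rho> w) {..<n}"
    and "t < n"
  obtains j where "dipole_tour n \<rho> v (SOME e. e \<in> inc (dipole n) v) j t"
proof -
  let ?e0 = "SOME e. e \<in> inc (dipole n) v"
  have "?e0 < n" using \<open>t < n\<close> v someI[of "\<lambda>e. e < n" t] by simp
  then have "(\<lambda>j. (\<rho> v ^^ j) ?e0) ` {..<n} = {..<n}"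
    using cyclic_rotation_orbit(1)[OF rot[OF v], of ?e0] by (simp add: bij_betw_def)
  then have "t \<in> (\<lambda>j. (\<rho> v ^^ j) ?e0) ` {..<n}" using \<open>t < n\<close> by simp
  then obtain j where "j < n" "t = (\<rho> v ^^ j) ?e0" by auto
  then show ?thesis using v rot by (intro that dipole_tour.intro) simp_all
qed

lemma bernardi_dipole:
  assumes v: "v \<in> {0, 1}" and rot: "\<And>w. w \<in> {0, 1} \<Longrightarrow> cyclic_rotation (\<rho> w) {..<n}"
    and "t < n"
  shows "bernardi (dipole n) \<rho> v (dipole_class n k) {t} =
    {(\<rho> v ^^ nat ((if v = 0 then k else - k) mod int n)) t}"
proof -
  define s where "s = (if v = 0 then k else - k)"
  let ?e0 = "SOME e. e \<in> inc (dipole n) v"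
  let ?t' = "(\<rho> v ^^ nat (s mod int n)) t"
  obtain j where tour_t: "dipole_tour n \<rho> v ?e0 j t" using dipole_tour_exists[OF v rot \<open>t < n\<close>] .
  define j' where "j' = (j + nat (s mod int n)) mod n"
  have tour_t': "dipole_tour n \<rho> v ?e0 j' ?t'"
    unfolding j'_def by (rule dipole_tour.dipole_tour_shift[OF tour_t])
  have "int j' = (int j + s mod int n) mod int n"
    using \<open>t < n\<close> by (simp add: j'_def zmod_int)
  then have shift: "(int j' - int j) mod int n = s mod int n"
    by (simp add: mod_diff_left_eq)
  show ?thesis
    unfolding bernardi_def s_def[symmetric]
  proof (rule the_equality)
    have "?t' < n" using dipole_tour.t_less[OF tour_t'] .
    then show "{?t'} \<in> spanning_trees (dipole n) \<and>
      (\<lambda>w. bern_div (dipole n) \<rho> v {?t'} w - bern_div (dipole n) \<rho> v {t} w) \<in> dipole_class n k"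
      using bern_div_diff_in_dipole_class[OF tour_t' tour_t] shift
      by (auto simp: spanning_trees_dipole s_def)
  next
    fix T' assume T': "T' \<in> spanning_trees (dipole n) \<and>
      (\<lambda>w. bern_div (dipole n) \<rho> v T' w - bern_div (dipole n) \<rho> v {t} w) \<in> dipole_class n k"
    then obtain a where "a < n" and a: "T' = {a}" by (auto simp: spanning_trees_dipole)
    obtain ja where tour_a: "dipole_tour n \<rho> v ?e0 ja a"
      using dipole_tour_exists[OF v rot \<open>a < n\<close>] .
    have "(int ja - int j) mod int n = (int j' - int j) mod int n"
      using T' bern_div_diff_in_dipole_class[OF tour_a tour_t] shift
      unfolding a by (simp add: s_def)
    then have "(int ja - int j + int j) mod int n = (int j' - int j + int j) mod int n"
      by (rule mod_add_cong) simp
    then have "ja = j'"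
      using dipole_tour.j[OF tour_a] dipole_tour.j[OF tour_t'] by simp
    then show "T' = {?t'}"
      using a dipole_tour.dipole_tour_tree_eq_iff[OF tour_t' tour_a] by simp
  qed
qed

lemma torsor_dipole_funpow:
  assumes v: "v \<in> {0, 1}" and rot: "\<And>w. w \<in> {0, 1} \<Longrightarrow> cyclic_rotation (\<rho> w) {..<n}"
    and "t < n" and ab: "(int a * b) mod int n = 1 mod int n"
  shows "torsor \<alpha> (dipole n) (\<lambda>w. \<rho> w ^^ a) v (dipole_class n (b * k)) {t} =
    torsor \<alpha> (dipole n) \<rho> v (dipole_class n k) {t}"
proof -
  have "0 < n" using \<open>t < n\<close> by simp
  have rot_a: "cyclic_rotation (\<rho> w ^^ a) {..<n}" if "w \<in> {0, 1}" for w
    using cyclic_rotation_funpow[OF rot[OF that]] ab by simp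
  have per: "(\<rho> w ^^ n) t = t" if "w \<in> {0, 1}" for w
    using cyclic_rotation_orbit(2)[OF rot[OF that], of t] \<open>t < n\<close> by simp
  have per_a: "((\<rho> w ^^ a) ^^ n) t = t" if "w \<in> {0, 1}" for w
    using cyclic_rotation_orbit(2)[OF rot_a[OF that], of t] \<open>t < n\<close> by simp
  have scale: "(if P then b * k else - (b * k)) = b * (if P then k else - k)" for P by simp
  show ?thesis
  proof (cases \<alpha>)
    case RotorRouting
    have u: "1 - v \<in> {0, 1}" by auto
    show ?thesis
      unfolding RotorRouting torsor.simps
        rotor_routing_dipole[where \<rho>="\<lambda>w. \<rho> w ^^ a", OF v \<open>0 < n\<close> per_a[OF u]]
        rotor_routing_dipole[where \<rho>=\<rho>, OF v \<open>0 < n\<close> per[OF u]]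
      unfolding scale funpow_scaled_exponent[OF per[OF u] \<open>0 < n\<close> ab] ..
  next
    case Bernardi
    have "bernardi (dipole n) (\<lambda>w. \<rho> w ^^ a) v (dipole_class n (b * k)) {t} =
        {((\<rho> v ^^ a) ^^ nat ((if v = 0 then b * k else - (b * k)) mod int n)) t}"
      using bernardi_dipole[where \<rho>="\<lambda>w. \<rho> w ^^ a", OF v _ \<open>t < n\<close>] rot_a by simp
    also have "\<dots> = bernardi (dipole n) \<rho> v (dipole_class n k) {t}"
      unfolding scale funpow_scaled_exponent[OF per[OF v] \<open>0 < n\<close> ab]
      using bernardi_dipole[OF v rot \<open>t < n\<close>] by simp
    finally show ?thesis by (simp add: Bernardi)
  qed
qed

definition rot5 :: "nat \<Rightarrow> nat \<Rightarrow> nat" where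
  "rot5 u e = (if u = 0 then [1, 2, 3, 4, 0] else [1, 3, 0, 4, 2]) ! e"

lemma cyclic_rotation_rot5: "u \<in> {0, 1} \<Longrightarrow> cyclic_rotation (rot5 u) {..<5}"
  by (elim insertE emptyE; rule cyclic_rotationI[where x = 0 and n = 5])
    (simp_all add: funpow_numeral rot5_def lessThan_nat_numeral insert_commute)

lemma cyc_rot5: "cyc (dipole 5) rot5 = 1"
proof -
  let ?H = "half_edges (dipole 5)"
  let ?f = "face_perm (dipole 5) rot5"
  have H: "?H = {(0, 0), (1, 0), (2, 0), (3, 0), (4, 0), (0, 1), (1, 1), (2, 1), (3, 1), (4, 1)}"
    by (auto simp: half_edges_dipole lessThan_nat_numeral)
  have closed: "?f ` ?H \<subseteq> ?H" unfolding H by (simp add: face_perm_dipole rot5_def)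
  have reach: "?H \<subseteq> (\<lambda>m. (?f ^^ m) h) ` {..<10}" if "h \<in> ?H" for h
    using that unfolding H
    by (elim insertE emptyE;
        simp add: funpow_numeral face_perm_dipole rot5_def lessThan_nat_numeral)
  have "{(?f ^^ m) h | m. True} = ?H" if "h \<in> ?H" for h
    using funpow_orbit_eqI[OF closed that reach[OF that]] .
  moreover have "?H \<noteq> {}" by (simp add: H)
  ultimately have "{{(?f ^^ m) h | m. True} | h. h \<in> ?H} = {?H}" by blast
  then show ?thesis unfolding cyc_def by simp
qed

lemma cyc_rot5_squared: "cyc (dipole 5) (\<lambda>u. rot5 u ^^ 2) = 3"
proof -
  let ?H = "half_edges (dipole 5)"
  let ?f = "face_perm (dipole 5) (\<lambda>u. rot5 u ^^ 2)"
  define A where "A = {(0, 0), (3, 1) :: nat \<times> nat}"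
  define B where "B = {(0, 1), (2, 0), (1, 1), (3, 0), (2, 1), (4, 0) :: nat \<times> nat}"
  define C where "C = {(1, 0), (4, 1) :: nat \<times> nat}"
  have H: "?H = A \<union> B \<union> C"
    by (auto simp: half_edges_dipole lessThan_nat_numeral A_def B_def C_def)
  have closed: "?f ` F \<subseteq> F" if "F \<in> {A, B, C}" for F
    using that unfolding A_def B_def C_def
    by (elim insertE emptyE) (simp_all add: funpow_numeral face_perm_dipole rot5_def)
  have reach: "F \<subseteq> (\<lambda>m. (?f ^^ m) h) ` {..<6}" if "F \<in> {A, B, C}" and "h \<in> F" for F h
    using that unfolding A_def B_def C_def
    by (elim insertE emptyE; hypsubst; elim insertE emptyE;
        simp add: funpow_numeral face_perm_dipole rot5_def lessThan_nat_numeral)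
  have orbit: "{(?f ^^ m) h | m. True} = F" if "F \<in> {A, B, C}" "h \<in> F" for F h
    using funpow_orbit_eqI[OF closed[OF that(1)] that(2) reach[OF that]] .
  have "{{(?f ^^ m) h | m. True} | h. h \<in> ?H} = {A, B, C}"
  proof -
    have "A \<noteq> {}" "B \<noteq> {}" "C \<noteq> {}" by (simp_all add: A_def B_def C_def)
    then show ?thesis unfolding H using orbit by blast
  qed
  moreover have "card {A, B, C} = 3"
  proof -
    have "(0, 0) \<in> A" "(0, 0) \<notin> B" "(0, 0) \<notin> C" "(1, 0) \<in> C" "(1, 0) \<notin> B"
      by (simp_all add: A_def B_def C_def)
    then have "A \<noteq> B" "A \<noteq> C" "B \<noteq> C" by blast+
    then show ?thesis by simp
  qed
  ultimately show ?thesis unfolding cyc_def by simp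
qed

theorem theorem1p5:
  fixes \<alpha> :: torsor_kind
  shows "\<exists>(G :: (nat, nat) mgraph) \<rho> (G' :: (nat, nat) mgraph) \<rho>' \<phi> \<gamma>.
     ribbon_graph G \<rho> \<and> ribbon_graph G' \<rho>' \<and> verts G = verts G' \<and>
     bij_betw \<phi> (spanning_trees G) (spanning_trees G') \<and>
     \<gamma> \<in> iso (Pic0 G) (Pic0 G') \<and>
     (\<forall>v\<in>verts G. \<forall>S\<in>carrier (Pic0 G). \<forall>T\<in>spanning_trees G.
        \<phi> (torsor \<alpha> G \<rho> v S T) = torsor \<alpha> G' \<rho>' v (\<gamma> S) (\<phi> T)) \<and>
     genus G \<rho> \<noteq> genus G' \<rho>'"
proof -
  let ?\<rho>' = "\<lambda>u. rot5 u ^^ 2"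
  have inverse: "(int 2 * 3) mod int 5 = 1 mod int 5" by simp
  have "ribbon_graph (dipole 5) rot5" "ribbon_graph (dipole 5) ?\<rho>'"
    using cyclic_rotation_rot5 cyclic_rotation_funpow[OF cyclic_rotation_rot5 _ , of _ 2 3]
    by (auto intro!: ribbon_graph_dipoleI)
  moreover have "dipole_scale 5 3 \<in> iso (Pic0 (dipole 5)) (Pic0 (dipole 5))"
    using dipole_scale_iso[OF inverse] .
  moreover have "\<forall>v\<in>verts (dipole 5). \<forall>S\<in>carrier (Pic0 (dipole 5)). \<forall>T\<in>spanning_trees (dipole 5).
      id (torsor \<alpha> (dipole 5) rot5 v S T) = torsor \<alpha> (dipole 5) ?\<rho>' v (dipole_scale 5 3 S) (id T)"
    unfolding carrier_Pic0_dipole spanning_trees_dipole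
    using torsor_dipole_funpow[OF _ cyclic_rotation_rot5 _ inverse]
    by (auto simp: dipole_scale_class)
  moreover have "genus (dipole 5) rot5 \<noteq> genus (dipole 5) ?\<rho>'"
    by (simp add: genus_def cyc_rot5 cyc_rot5_squared)
  ultimately show ?thesis
    by (intro exI[of _ "dipole 5"] exI[of _ rot5] exI[of _ "dipole 5"] exI[of _ ?\<rho>'] exI[of _ id]
        exI[of _ "dipole_scale 5 3"]) simp
qed

end
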